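(* There is an absolute constant $C$ such that for all positive integers $d$ and all $x\in\mathbb{R}$ with $|x|\le\sqrt d$, $$|r_d(x)|\le C\max\left\{\frac{|x|^3}{\sqrt d},\frac{|x|}{\sqrt d},\frac{x^2}{d},\frac1d\right\}.$$
   Context: The Hermite polynomials $(H_k)_{k\ge0}$ are the orthonormal polynomials for $\mathcal{N}(0,1)$ with $\deg H_k=k$ and positive leading coefficient (the probabilist's Hermite polynomials divided by $\sqrt{k!}$). The remainder $r_d(x)$ is defined by $$H_d(x)=\exp\!\left(\frac{x^2}{4}\right)\left(\frac{2}{\pi d}\right)^{1/4}\left(\sin\!\left[\frac{1-d}{2}\pi+\sqrt d\,x\right]+r_d(x)\right).$$ *)

theory Defs
  imports "HOL-Analysis.Analysis"
begin

fun hermite_prob :: "nat \<Rightarrow> real \<Rightarrow> real" where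
  "hermite_prob 0 x = 1"
| "hermite_prob (Suc 0) x = x"
| "hermite_prob (Suc (Suc k)) x = x * hermite_prob (Suc k) x - real (Suc k) * hermite_prob k x"

text \<open>Orthonormal Hermite polynomials for N(0,1): H_k = He_k / sqrt(k!).\<close>
definition hermite :: "nat \<Rightarrow> real \<Rightarrow> real" where
  "hermite k x = hermite_prob k x / sqrt (fact k)"

text \<open>The remainder r_d(x), defined by
  H_d(x) = exp(x^2/4) (2/(pi d))^(1/4) (sin((1-d)/2 pi + sqrt d x) + r_d(x)).\<close>
definition hermite_rem :: "nat \<Rightarrow> real \<Rightarrow> real" where
  "hermite_rem d x = hermite d x / (exp (x\<^sup>2 / 4) * (2 / (pi * real d)) powr (1/4))
      - sin ((1 - real d) / 2 * pi + sqrt (real d) * x)"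

end

theory Submission
  imports Defs
begin

text \<open>
  The normalised Hermite function y(x) = exp(-x^2/4) He_d(x) / (sqrt(d!) (2/(pi d))^(1/4)) solves
  Weber's equation y'' + (d + 1/2 - x^2/4) y = 0. Its energy y'^2 + (d + 1/2 - x^2/4) y^2 is
  largest at x = 0, which gives |y| <= 5 on |x| <= sqrt d. The remainder w = y - sin(theta_d + sqrt d x)
  solves the forced oscillator equation w'' + d w = (x^2/4 - 1/2) y, so its amplitude
  sqrt(w'^2/d + w^2) moves at rate at most 5 |x^2/4 - 1/2| / sqrt d. At x = 0 the amplitude is
  |v_d - 1|, where v_d^4 = (pi d / 2) (binom(2m, m) / 4^m)^2 with m = d div 2, and Wallis' product
  gives |v_d - 1| <= 2/d.
\<close>

section \<open>Energy and amplitude estimates for linear oscillators\<close>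

lemma weber_energy_le_energy_at_zero:
  fixes y y' :: "real \<Rightarrow> real" and c x :: real
  assumes y: "\<And>t. (y has_real_derivative y' t) (at t)"
    and y': "\<And>t. (y' has_real_derivative - (c - t\<^sup>2 / 4) * y t) (at t)"
  shows "y' x ^ 2 + (c - x\<^sup>2 / 4) * y x ^ 2 \<le> y' 0 ^ 2 + c * y 0 ^ 2"
proof -
  define E where "E t = y' t ^ 2 + (c - t\<^sup>2 / 4) * y t ^ 2" for t
  have E_deriv: "(E has_real_derivative - (t / 2) * y t ^ 2) (at t)" for t
    unfolding E_def [abs_def]
    by (auto intro!: derivative_eq_intros y y' simp: algebra_simps power2_eq_square)
  have "E x \<le> E 0"
  proof (cases "x \<ge> 0")
    case True
    show ?thesis
    proof (rule DERIV_nonpos_imp_nonincreasing[OF True])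
      fix t :: real
      assume "0 \<le> t"
      then show "\<exists>D. (E has_real_derivative D) (at t) \<and> D \<le> 0"
        using E_deriv by (intro exI[of _ "- (t / 2) * y t ^ 2"]) simp
    qed
  next
    case False
    show ?thesis
    proof (rule DERIV_nonneg_imp_nondecreasing[of x 0])
      fix t :: real
      assume "t \<le> 0"
      then show "\<exists>D. (E has_real_derivative D) (at t) \<and> D \<ge> 0"
        using E_deriv by (intro exI[of _ "- (t / 2) * y t ^ 2"]) (simp add: mult_nonpos_nonneg)
    qed (use False in simp)
  qed
  then show ?thesis unfolding E_def by simp
qed

lemma abs_diff_le_of_deriv_dominated:
  fixes S P S' P' :: "real \<Rightarrow> real"
  assumes "a \<le> b"
    and "\<And>t. a \<le> t \<Longrightarrow> t \<le> b \<Longrightarrow> (S has_real_derivative S' t) (at t)"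
    and "\<And>t. a \<le> t \<Longrightarrow> t \<le> b \<Longrightarrow> (P has_real_derivative P' t) (at t)"
    and "\<And>t. a \<le> t \<Longrightarrow> t \<le> b \<Longrightarrow> \<bar>S' t\<bar> \<le> P' t"
  shows "\<bar>S b - S a\<bar> \<le> P b - P a"
proof -
  have "(\<lambda>t. P t - S t) a \<le> (\<lambda>t. P t - S t) b"
    by (rule DERIV_nonneg_imp_nondecreasing[OF assms(1)])
      (use assms in \<open>force intro!: DERIV_diff\<close>)
  moreover have "(\<lambda>t. P t + S t) a \<le> (\<lambda>t. P t + S t) b"
    by (rule DERIV_nonneg_imp_nondecreasing[OF assms(1)])
      (use assms in \<open>force intro!: DERIV_add\<close>)
  ultimately show ?thesis by simp
qed

lemma oscillator_smoothed_amplitude_diff_le: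
  fixes w w' g G G' :: "real \<Rightarrow> real" and k a b \<epsilon> :: real
  assumes "k > 0" "\<epsilon> > 0" "a \<le> b"
    and w: "\<And>t. a \<le> t \<Longrightarrow> t \<le> b \<Longrightarrow> (w has_real_derivative w' t) (at t)"
    and w': "\<And>t. a \<le> t \<Longrightarrow> t \<le> b \<Longrightarrow> (w' has_real_derivative - k * w t + g t) (at t)"
    and G: "\<And>t. a \<le> t \<Longrightarrow> t \<le> b \<Longrightarrow> (G has_real_derivative G' t) (at t)"
    and g: "\<And>t. a \<le> t \<Longrightarrow> t \<le> b \<Longrightarrow> \<bar>g t\<bar> \<le> G' t"
  shows "\<bar>sqrt (w' b ^ 2 / k + w b ^ 2 + \<epsilon>) - sqrt (w' a ^ 2 / k + w a ^ 2 + \<epsilon>)\<bar>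
    \<le> G b / sqrt k - G a / sqrt k"
proof (rule abs_diff_le_of_deriv_dominated[OF \<open>a \<le> b\<close>])
  fix t
  assume t: "a \<le> t" "t \<le> b"
  define s where "s = sqrt (w' t ^ 2 / k + w t ^ 2 + \<epsilon>)"
  have radicand_pos: "w' t ^ 2 / k + w t ^ 2 + \<epsilon> > 0"
    using \<open>k > 0\<close> \<open>\<epsilon> > 0\<close> by (simp add: add_nonneg_pos)
  then have s_pos: "s > 0"
    unfolding s_def by simp
  have "((\<lambda>t. w' t ^ 2 / k + w t ^ 2 + \<epsilon>) has_real_derivative 2 * w' t * g t / k) (at t)"
    using \<open>k > 0\<close>
    by (auto intro!: derivative_eq_intros w w' t simp: field_simps power2_eq_square)
  from DERIV_chain2[OF DERIV_real_sqrt[OF radicand_pos] this]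
  show "((\<lambda>t. sqrt (w' t ^ 2 / k + w t ^ 2 + \<epsilon>)) has_real_derivative
      inverse s / 2 * (2 * w' t * g t / k)) (at t)"
    unfolding s_def .
  show "((\<lambda>t. G t / sqrt k) has_real_derivative G' t / sqrt k) (at t)"
    by (intro DERIV_cdivide G t)
  have "w' t ^ 2 \<le> (sqrt k * s) ^ 2"
    using \<open>\<epsilon> > 0\<close> \<open>k > 0\<close> radicand_pos
    unfolding s_def by (simp add: power_mult_distrib field_simps)
  then have w'_le: "\<bar>w' t\<bar> \<le> sqrt k * s"
    using s_pos \<open>k > 0\<close> by (simp add: abs_le_square_iff[symmetric])
  have "\<bar>inverse s / 2 * (2 * w' t * g t / k)\<bar> = \<bar>w' t\<bar> * \<bar>g t\<bar> / (s * k)"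
    using s_pos \<open>k > 0\<close> by (simp add: abs_mult field_simps)
  also have "\<dots> \<le> sqrt k * s * \<bar>g t\<bar> / (s * k)"
    using w'_le s_pos \<open>k > 0\<close> by (intro divide_right_mono mult_right_mono) auto
  also have "\<dots> = \<bar>g t\<bar> / sqrt k"
    using s_pos \<open>k > 0\<close> by (simp add: field_simps real_sqrt_mult_self flip: real_sqrt_mult)
  also have "\<dots> \<le> G' t / sqrt k"
    using g[OF t] \<open>k > 0\<close> by (simp add: divide_right_mono)
  finally show "\<bar>inverse s / 2 * (2 * w' t * g t / k)\<bar> \<le> G' t / sqrt k" .
qed

text \<open>The amplitude itself need not be differentiable where it vanishes, hence the detour
  through the smoothed amplitude and the limit \<open>\<epsilon> \<rightarrow> 0\<close>.\<close>

lemma oscillator_amplitude_diff_le: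
  fixes w w' g G G' :: "real \<Rightarrow> real" and k a b :: real
  assumes "k > 0" "a \<le> b"
    and "\<And>t. a \<le> t \<Longrightarrow> t \<le> b \<Longrightarrow> (w has_real_derivative w' t) (at t)"
    and "\<And>t. a \<le> t \<Longrightarrow> t \<le> b \<Longrightarrow> (w' has_real_derivative - k * w t + g t) (at t)"
    and "\<And>t. a \<le> t \<Longrightarrow> t \<le> b \<Longrightarrow> (G has_real_derivative G' t) (at t)"
    and "\<And>t. a \<le> t \<Longrightarrow> t \<le> b \<Longrightarrow> \<bar>g t\<bar> \<le> G' t"
  shows "\<bar>sqrt (w' b ^ 2 / k + w b ^ 2) - sqrt (w' a ^ 2 / k + w a ^ 2)\<bar> \<le> (G b - G a) / sqrt k"
proof (rule field_le_epsilon)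
  define F where "F t = w' t ^ 2 / k + w t ^ 2" for t
  have smoothing_error: "sqrt (F t) \<le> sqrt (F t + \<epsilon>) \<and> sqrt (F t + \<epsilon>) \<le> sqrt (F t) + sqrt \<epsilon>"
    if "\<epsilon> > 0" for t \<epsilon>
    using sqrt_add_le_add_sqrt[of "F t" \<epsilon>] that \<open>k > 0\<close> unfolding F_def by simp
  fix e :: real
  assume "e > 0"
  then have eps: "(e / 2)\<^sup>2 > 0" "sqrt ((e / 2)\<^sup>2) = e / 2"
    by simp_all
  show "\<bar>sqrt (w' b ^ 2 / k + w b ^ 2) - sqrt (w' a ^ 2 / k + w a ^ 2)\<bar> \<le> (G b - G a) / sqrt k + e"
    using oscillator_smoothed_amplitude_diff_le[OF \<open>k > 0\<close> eps(1) assms(2-)]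
      smoothing_error[OF eps(1), of a] smoothing_error[OF eps(1), of b]
    unfolding eps(2) diff_divide_distrib F_def by linarith
qed

section \<open>Wallis bounds for the central binomial coefficient\<close>

definition central_binomial_ratio :: "nat \<Rightarrow> real" where
  "central_binomial_ratio m = fact (2*m) / (4^m * (fact m)\<^sup>2)"

definition wallis_partial :: "nat \<Rightarrow> real" where
  "wallis_partial n = (\<Prod>k=1..n. 4 * real k ^ 2 / (4 * real k ^ 2 - 1))"

lemma central_binomial_ratio_Suc:
  "central_binomial_ratio (Suc m) = central_binomial_ratio m * (2 * real m + 1) / (2 * real m + 2)"
proof -
  have F: "fact (2 * Suc m) = (2 * (real m + 1)) * (2 * real m + 1) * (fact (2*m) :: real)"
    by (simp add: algebra_simps)
  have f: "fact (Suc m) = (real m + 1) * (fact m :: real)"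
    by simp
  have "0 < (fact m :: real)" by simp
  then show ?thesis
    unfolding central_binomial_ratio_def F f
    by (simp add: divide_simps power2_eq_square) (simp add: algebra_simps)
qed

lemma wallis_partial_Suc:
  "wallis_partial (Suc n) = wallis_partial n * (4 * (real n + 1)^2 / ((2 * real n + 1) * (2 * real n + 3)))"
  unfolding wallis_partial_def by (simp add: algebra_simps power2_eq_square)

lemma wallis_partial_pos: "wallis_partial n > 0"
proof (induction n)
  case 0
  then show ?case by (simp add: wallis_partial_def)
next
  case (Suc n)
  have "0 < (2 * real n + 1) * (2 * real n + 3)" by simp
  with Suc show ?case unfolding wallis_partial_Suc by (simp add: zero_less_mult_iff)
qed

lemma wallis_partial_tendsto: "wallis_partial \<longlonglongrightarrow> pi / 2"
  unfolding wallis_partial_def using wallis by simp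

lemma wallis_partial_le: "wallis_partial n \<le> pi / 2"
proof (rule incseq_le[OF _ wallis_partial_tendsto])
  show "incseq wallis_partial"
  proof (rule incseq_SucI)
    fix n
    have "0 < (2 * real n + 1) * (2 * real n + 3)" by simp
    moreover have "(2 * real n + 1) * (2 * real n + 3) \<le> 4 * (real n + 1)^2"
      by (simp add: power2_eq_square algebra_simps)
    ultimately have factor: "1 \<le> 4 * (real n + 1)^2 / ((2 * real n + 1) * (2 * real n + 3))"
      by simp
    show "wallis_partial n \<le> wallis_partial (Suc n)"
      using mult_left_mono[OF factor less_imp_le[OF wallis_partial_pos[of n]]]
      unfolding wallis_partial_Suc by simp
  qed
qed

lemma central_binomial_ratio_wallis:
  "(2 * real m + 1) * central_binomial_ratio m ^ 2 * wallis_partial m = 1"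
proof (induction m)
  case 0
  then show ?case by (simp add: central_binomial_ratio_def wallis_partial_def)
next
  case (Suc m)
  have cancel: "b * (P * a^2 / c) * (W * (c / (a * b))) = a * P * W"
    if "a > 0" "b > 0" "c > 0" for a b c P W :: real
    using that by (simp add: field_simps power2_eq_square)
  have "(2 * real m + 2)^2 = 4 * (real m + 1)^2"
    by (simp add: power2_eq_square algebra_simps)
  then have "(2 * real (Suc m) + 1) * central_binomial_ratio (Suc m) ^ 2 * wallis_partial (Suc m)
      = (2 * real m + 3) * (central_binomial_ratio m ^ 2 * (2 * real m + 1)^2 / (4 * (real m + 1)^2))
        * (wallis_partial m * (4 * (real m + 1)^2 / ((2 * real m + 1) * (2 * real m + 3))))"
    unfolding central_binomial_ratio_Suc wallis_partial_Suc
    by (simp add: power_divide power_mult_distrib add_ac)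
  also have "\<dots> = (2 * real m + 1) * central_binomial_ratio m ^ 2 * wallis_partial m"
    by (rule cancel) auto
  finally show ?case using Suc.IH by simp
qed

lemma central_binomial_ratio_sq_eq:
  "(2 * real m + 1) * central_binomial_ratio m ^ 2 = 1 / wallis_partial m"
  using central_binomial_ratio_wallis[of m] wallis_partial_pos[of m] by (simp add: field_simps)

lemma central_binomial_ratio_sq_lower: "2 / pi \<le> (2 * real m + 1) * central_binomial_ratio m ^ 2"
proof -
  have "(2 * real m + 1) * central_binomial_ratio m ^ 2 = 1 / wallis_partial m"
    by (rule central_binomial_ratio_sq_eq)
  also have "2 / pi \<le> 1 / wallis_partial m"
    using wallis_partial_le[of m] wallis_partial_pos[of m] by (simp add: field_simps)
  finally show ?thesis .
qed

lemma central_binomial_ratio_sq_incseq: "incseq (\<lambda>m. 2 * real m * central_binomial_ratio m ^ 2)"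
proof (rule incseq_SucI)
  fix m
  have rescale: "a^2 / c * P^2 = c * (P * a / c)^2" if "c \<noteq> 0" for a c P :: real
    using that by (simp add: power2_eq_square field_simps)
  have "2 * real m * (2 * real m + 2) \<le> (2 * real m + 1)^2"
    by (simp add: power2_eq_square algebra_simps)
  then have "2 * real m * central_binomial_ratio m ^ 2
      \<le> (2 * real m + 1)^2 / (2 * real m + 2) * central_binomial_ratio m ^ 2"
    by (intro mult_right_mono) (simp_all add: field_simps)
  also have "\<dots> = (2 * real m + 2) * (central_binomial_ratio m * (2 * real m + 1) / (2 * real m + 2))^2"
    by (rule rescale) simp
  also have "\<dots> = 2 * real (Suc m) * central_binomial_ratio (Suc m) ^ 2"
    unfolding central_binomial_ratio_Suc by simp
  finally show "2 * real m * central_binomial_ratio m ^ 2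
      \<le> 2 * real (Suc m) * central_binomial_ratio (Suc m) ^ 2" .
qed

lemma central_binomial_ratio_sq_upper: "2 * real m * central_binomial_ratio m ^ 2 \<le> 2 / pi"
proof (rule incseq_le[OF central_binomial_ratio_sq_incseq])
  have "strict_mono (\<lambda>m::nat. 2 * m)"
    by (rule strict_monoI) simp
  from LIMSEQ_subseq_LIMSEQ[OF LIMSEQ_n_over_Suc_n[where 'a = real] this]
  have "(\<lambda>m. 2 * real m / (2 * real m + 1)) \<longlonglongrightarrow> 1"
    by (simp add: o_def add.commute)
  then have "(\<lambda>m. 2 * real m / (2 * real m + 1) * (1 / wallis_partial m)) \<longlonglongrightarrow> 1 * (1 / (pi / 2))"
    by (intro tendsto_mult tendsto_divide wallis_partial_tendsto) auto
  moreover have "2 * real m / (2 * real m + 1) * (1 / wallis_partial m)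
      = 2 * real m * central_binomial_ratio m ^ 2" for m
    unfolding central_binomial_ratio_sq_eq[symmetric] by simp
  ultimately show "(\<lambda>m. 2 * real m * central_binomial_ratio m ^ 2) \<longlonglongrightarrow> 2 / pi"
    by simp
qed

lemma central_binomial_ratio_sq_approx:
  assumes "d \<ge> 1"
  shows "\<bar>real d * (pi / 2 * central_binomial_ratio (d div 2) ^ 2) - 1\<bar> \<le> 2 / real d"
proof -
  define m where "m = d div 2"
  define q where "q = pi / 2 * central_binomial_ratio m ^ 2"
  have q_nonneg: "q \<ge> 0" unfolding q_def by simp
  have lower: "1 \<le> 2 * (real m * q) + q"
    using central_binomial_ratio_sq_lower[of m] unfolding q_def by (simp add: field_simps)
  have upper: "2 * (real m * q) \<le> 1"
    using central_binomial_ratio_sq_upper[of m] unfolding q_def by (simp add: field_simps)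
  have d_cases: "real d * q = 2 * (real m * q) \<or> real d * q = 2 * (real m * q) + q"
    unfolding m_def by (cases "even d") (auto elim!: evenE oddE simp: algebra_simps)
  have "real d * q \<le> 2"
  proof (cases "m = 0")
    case True
    then have "d = 1" using assms unfolding m_def by auto
    then show ?thesis using True pi_less_4 unfolding q_def by (simp add: central_binomial_ratio_def)
  next
    case False
    then have "q \<le> real m * q" using q_nonneg by (simp add: mult_le_cancel_right1)
    then show ?thesis using d_cases upper by linarith
  qed
  then have "q \<le> 2 / real d" using assms by (simp add: field_simps)
  moreover have "\<bar>real d * q - 1\<bar> \<le> q" using d_cases lower upper by linarith
  ultimately show ?thesis unfolding q_def m_def by linarith
qed

lemma sqrt_central_binomial_ratio:
  "sqrt (central_binomial_ratio m) = sqrt (fact (2*m)) / (2^m * fact m)"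
proof -
  have "(4::real)^m = (2^m)\<^sup>2"
    by (simp add: power2_eq_square flip: power_mult_distrib)
  then have "central_binomial_ratio m = (sqrt (fact (2*m)) / (2^m * fact m))\<^sup>2"
    unfolding central_binomial_ratio_def by (simp add: power_divide power_mult_distrib)
  then show ?thesis by simp
qed

section \<open>Hermite functions\<close>

lemma hermite_prob_Suc:
  "hermite_prob (Suc n) x = x * hermite_prob n x - real n * hermite_prob (n - 1) x"
  by (cases n) auto

lemma DERIV_hermite_prob:
  "(hermite_prob n has_real_derivative real n * hermite_prob (n - 1) x) (at x)"
proof (induction n x rule: hermite_prob.induct)
  case (3 k x)
  have "((\<lambda>x. x * hermite_prob (Suc k) x - real (Suc k) * hermite_prob k x) has_real_derivative
      real (Suc (Suc k)) * hermite_prob (Suc k) x) (at x)"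
    using "3" by (auto intro!: derivative_eq_intros simp: hermite_prob_Suc[of k x] algebra_simps)
  then show ?case by simp
qed auto

lemma hermite_prob_odd_zero: "hermite_prob (2*m+1) 0 = 0"
proof (induction m)
  case (Suc m)
  have "2 * Suc m + 1 = Suc (Suc (2*m+1))" by simp
  with Suc.IH show ?case by simp
qed simp

lemma hermite_prob_even_zero:
  "hermite_prob (2*m) 0 = (-1)^m * fact (2*m) / (2^m * fact m)"
proof (induction m)
  case (Suc m)
  have num: "(2 * real m + 2) * ((2 * real m + 1) * fact (2*m)) = fact (2 * Suc m)"
    by (simp add: algebra_simps)
  have den: "(2 * real m + 2) * (2^m * fact m) = 2^Suc m * fact (Suc m)"
    by (simp add: algebra_simps)
  have "2 * Suc m = Suc (Suc (2*m))" by simp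
  then have "hermite_prob (2 * Suc m) 0 = - (2 * real m + 1) * hermite_prob (2*m) 0"
    by (simp add: algebra_simps)
  also have "\<dots> = (-1)^Suc m * ((2 * real m + 1) * fact (2*m) / (2^m * fact m))"
    unfolding Suc.IH by (simp add: algebra_simps)
  also have "\<dots> = (-1)^Suc m * ((2 * real m + 2) * ((2 * real m + 1) * fact (2*m))
      / ((2 * real m + 2) * (2^m * fact m)))"
    by (subst mult_divide_mult_cancel_left) simp_all
  finally show ?case unfolding num den by simp
qed simp

definition hermite_fun :: "nat \<Rightarrow> real \<Rightarrow> real" where
  "hermite_fun n x = exp (- x\<^sup>2 / 4) * hermite_prob n x"

definition hermite_fun_deriv :: "nat \<Rightarrow> real \<Rightarrow> real" where
  "hermite_fun_deriv n x = exp (- x\<^sup>2 / 4) * (real n * hermite_prob (n - 1) x - x / 2 * hermite_prob n x)"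

lemma DERIV_hermite_fun: "(hermite_fun n has_real_derivative hermite_fun_deriv n x) (at x)"
  unfolding hermite_fun_def [abs_def] hermite_fun_deriv_def
  by (auto intro!: derivative_eq_intros DERIV_hermite_prob simp: algebra_simps)

lemma DERIV_hermite_fun_deriv:
  "(hermite_fun_deriv n has_real_derivative - (real n + 1/2 - x\<^sup>2 / 4) * hermite_fun n x) (at x)"
proof (cases n)
  case 0
  show ?thesis
    unfolding 0 hermite_fun_def [abs_def] hermite_fun_deriv_def [abs_def]
    by (auto intro!: derivative_eq_intros simp: field_simps power2_eq_square)
next
  case (Suc k)
  have rec: "hermite_prob (Suc k) x = x * hermite_prob k x - real k * hermite_prob (k - 1) x"
    by (rule hermite_prob_Suc)
  have "((\<lambda>x. exp (- x\<^sup>2 / 4) * (real (Suc k) * hermite_prob k x - x / 2 * hermite_prob (Suc k) x))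
      has_real_derivative
        exp (- x\<^sup>2 / 4) * (- (2 * x) / 4) * (real (Suc k) * hermite_prob k x - x / 2 * hermite_prob (Suc k) x)
      + exp (- x\<^sup>2 / 4) * (real (Suc k) * (real k * hermite_prob (k - 1) x)
          - (1 / 2 * hermite_prob (Suc k) x + x / 2 * (real (Suc k) * hermite_prob k x)))) (at x)"
    by (auto intro!: derivative_eq_intros DERIV_hermite_prob simp: field_simps)
  also have "exp (- x\<^sup>2 / 4) * (- (2 * x) / 4) * (real (Suc k) * hermite_prob k x - x / 2 * hermite_prob (Suc k) x)
      + exp (- x\<^sup>2 / 4) * (real (Suc k) * (real k * hermite_prob (k - 1) x)
          - (1 / 2 * hermite_prob (Suc k) x + x / 2 * (real (Suc k) * hermite_prob k x)))
    = - (real (Suc k) + 1/2 - x\<^sup>2 / 4) * (exp (- x\<^sup>2 / 4) * hermite_prob (Suc k) x)"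
    unfolding rec by (simp add: algebra_simps power2_eq_square)
  finally show ?thesis
    unfolding Suc hermite_fun_def [abs_def] hermite_fun_deriv_def [abs_def] by simp
qed

section \<open>The scaled Hermite function and the remainder\<close>

definition hermite_scale :: "nat \<Rightarrow> real" where
  "hermite_scale d = 1 / (sqrt (fact d) * (2 / (pi * real d)) powr (1/4))"

definition hermite_phase :: "nat \<Rightarrow> real" where
  "hermite_phase d = (1 - real d) / 2 * pi"

text \<open>\<open>hermite_scale d * hermite_fun d\<close> has the same value and slope at \<open>0\<close> as
  \<open>hermite_amplitude d * sin (hermite_phase d + sqrt d * x)\<close> (lemma \<open>hermite_at_zero\<close>).\<close>

definition hermite_amplitude :: "nat \<Rightarrow> real" where
  "hermite_amplitude d = sqrt (central_binomial_ratio (d div 2)) / (2 / (pi * real d)) powr (1/4)"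

text \<open>No hypothesis on \<open>d\<close>: for \<open>d = 0\<close> both sides divide by zero.\<close>

lemma hermite_rem_eq:
  "hermite_rem d x = hermite_scale d * hermite_fun d x - sin (hermite_phase d + sqrt (real d) * x)"
  unfolding hermite_rem_def hermite_scale_def hermite_fun_def hermite_def hermite_phase_def
  by (simp add: exp_minus field_simps)

lemma hermite_amplitude_nonneg: "hermite_amplitude d \<ge> 0"
  unfolding hermite_amplitude_def by (simp add: central_binomial_ratio_def)

lemma hermite_amplitude_close_one:
  assumes "d \<ge> 1"
  shows "\<bar>hermite_amplitude d - 1\<bar> \<le> 2 / real d"
proof -
  define v where "v = hermite_amplitude d"
  have v_nonneg: "v \<ge> 0"
    unfolding v_def by (rule hermite_amplitude_nonneg)
  have "((2 / (pi * real d)) powr (1/4)) ^ 4 = 2 / (pi * real d)"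
    using assms by (subst powr_power) auto
  moreover have "sqrt (central_binomial_ratio (d div 2)) ^ 4 = central_binomial_ratio (d div 2) ^ 2"
  proof -
    have "sqrt (central_binomial_ratio (d div 2)) ^ 4 = (sqrt (central_binomial_ratio (d div 2)) ^ 2) ^ 2"
      unfolding power_mult [symmetric] by simp
    then show ?thesis by (simp add: central_binomial_ratio_def)
  qed
  ultimately have "v ^ 4 = real d * (pi / 2 * central_binomial_ratio (d div 2) ^ 2)"
    using assms unfolding v_def hermite_amplitude_def by (simp add: power_divide field_simps)
  then have pow4: "\<bar>v ^ 4 - 1\<bar> \<le> 2 / real d"
    using central_binomial_ratio_sq_approx[OF assms] by simp
  have "v ^ 4 - 1 = (v - 1) * ((v + 1) * (v\<^sup>2 + 1))"
    by (simp add: algebra_simps power2_eq_square power4_eq_xxxx)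
  then have "\<bar>v ^ 4 - 1\<bar> = \<bar>v - 1\<bar> * ((v + 1) * (v\<^sup>2 + 1))"
    using v_nonneg by (simp add: abs_mult)
  moreover have "1 \<le> (v + 1) * (v\<^sup>2 + 1)"
    using v_nonneg by (simp add: algebra_simps power2_eq_square)
  ultimately have "\<bar>v - 1\<bar> \<le> \<bar>v ^ 4 - 1\<bar>"
    by (metis abs_ge_zero mult_left_mono mult.right_neutral)
  with pow4 show ?thesis unfolding v_def by linarith
qed

lemma scaled_hermite_prob_even_zero:
  assumes "d \<ge> 1"
  shows "hermite_scale d * hermite_prob (2 * (d div 2)) 0
    = (-1)^(d div 2) * hermite_amplitude d * (sqrt (fact (2 * (d div 2))) / sqrt (fact d))"
proof -
  define m where "m = d div 2"
  define F :: real where "F = fact (2*m)"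
  have "F \<ge> 0"
    unfolding F_def by simp
  moreover have "F / sqrt F = sqrt F"
    unfolding F_def by (rule real_div_sqrt) simp
  moreover have "(2 / (pi * real d)) powr (1/4) > 0"
    using assms by simp
  ultimately have central: "hermite_scale d * (F / (2^m * fact m))
      = hermite_amplitude d * (sqrt F / sqrt (fact d))"
    unfolding hermite_scale_def hermite_amplitude_def sqrt_central_binomial_ratio
      m_def[symmetric] F_def[symmetric]
    by (simp add: field_simps)
  have "hermite_scale d * hermite_prob (2*m) 0 = (-1)^m * (hermite_scale d * (F / (2^m * fact m)))"
    unfolding hermite_prob_even_zero F_def by simp
  also have "\<dots> = (-1)^m * (hermite_amplitude d * (sqrt F / sqrt (fact d)))"
    unfolding central ..
  finally show ?thesis
    unfolding m_def F_def by (simp only: mult.assoc)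
qed

lemma hermite_at_zero:
  assumes "d \<ge> 1"
  shows "hermite_scale d * hermite_fun d 0 = hermite_amplitude d * sin (hermite_phase d)" (is ?value)
    and "hermite_scale d * hermite_fun_deriv d 0
      = sqrt (real d) * hermite_amplitude d * cos (hermite_phase d)" (is ?slope)
proof -
  define m where "m = d div 2"
  have central: "hermite_scale d * hermite_prob (2*m) 0
      = (-1)^m * hermite_amplitude d * (sqrt (fact (2*m)) / sqrt (fact d))"
    unfolding m_def by (rule scaled_hermite_prob_even_zero[OF assms])
  have "d = 2*m \<or> d = 2*m+1"
    unfolding m_def by auto
  then have "?value \<and> ?slope"
  proof
    assume d: "d = 2*m"
    then have "d - 1 = 2 * (m - 1) + 1"
      using assms by simp
    then have "hermite_prob (d - 1) 0 = 0"
      by (simp only: hermite_prob_odd_zero)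
    moreover have "hermite_phase d = pi / 2 - real m * pi"
      unfolding hermite_phase_def d by (simp add: field_simps)
    ultimately show "?value \<and> ?slope"
      using central unfolding hermite_fun_def hermite_fun_deriv_def d
      by (simp add: sin_diff cos_diff)
  next
    assume d: "d = 2*m+1"
    have ratio: "sqrt (fact (2*m)) / sqrt (fact d) = 1 / sqrt (real d)"
      unfolding d by (simp add: real_sqrt_mult)
    have phase: "hermite_phase d = - (real m * pi)"
      unfolding hermite_phase_def d by (simp add: field_simps)
    have "hermite_scale d * hermite_fun_deriv d 0 = real d * (hermite_scale d * hermite_prob (2*m) 0)"
      unfolding hermite_fun_deriv_def d by simp
    also have "\<dots> = (-1)^m * hermite_amplitude d * (real d / sqrt (real d))"
      unfolding central ratio by simp
    also have "\<dots> = sqrt (real d) * hermite_amplitude d * cos (hermite_phase d)"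
      unfolding phase real_div_sqrt[OF of_nat_0_le_iff] by simp
    finally have ?slope .
    moreover have ?value
      using hermite_prob_odd_zero[of m] unfolding hermite_fun_def phase unfolding d by simp
    ultimately show "?value \<and> ?slope" by simp
  qed
  then show ?value and ?slope by auto
qed

lemma hermite_amplitude_le_three:
  assumes "d \<ge> 1"
  shows "hermite_amplitude d \<le> 3"
proof -
  have "2 / real d \<le> 2"
    using assms by (simp add: field_simps)
  then show ?thesis
    using hermite_amplitude_close_one[OF assms] by linarith
qed

lemma scaled_hermite_energy_at_zero:
  assumes "d \<ge> 1"
  shows "(hermite_scale d * hermite_fun_deriv d 0)\<^sup>2 + (real d + 1/2) * (hermite_scale d * hermite_fun d 0)\<^sup>2
    \<le> (real d + 1/2) * (hermite_amplitude d)\<^sup>2"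
proof -
  define v where "v = hermite_amplitude d"
  define \<theta> where "\<theta> = hermite_phase d"
  have "(hermite_scale d * hermite_fun_deriv d 0)\<^sup>2 + (real d + 1/2) * (hermite_scale d * hermite_fun d 0)\<^sup>2
      = real d * (v\<^sup>2 * (cos \<theta>)\<^sup>2) + (real d + 1/2) * (v\<^sup>2 * (sin \<theta>)\<^sup>2)"
    using hermite_at_zero[OF assms] unfolding v_def \<theta>_def by (simp add: power_mult_distrib)
  also have "\<dots> \<le> (real d + 1/2) * (v\<^sup>2 * (cos \<theta>)\<^sup>2) + (real d + 1/2) * (v\<^sup>2 * (sin \<theta>)\<^sup>2)"
    by (intro add_right_mono mult_right_mono) auto
  also have "\<dots> = (real d + 1/2) * v\<^sup>2"
    by (simp flip: distrib_left)
  finally show ?thesis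
    unfolding v_def .
qed

lemma scaled_hermite_fun_bounded:
  assumes "d \<ge> 1" "\<bar>x\<bar> \<le> sqrt (real d)"
  shows "\<bar>hermite_scale d * hermite_fun d x\<bar> \<le> 5"
proof -
  define y where "y t = hermite_scale d * hermite_fun d t" for t
  define y' where "y' t = hermite_scale d * hermite_fun_deriv d t" for t
  have energy: "y' x ^ 2 + (real d + 1/2 - x\<^sup>2 / 4) * y x ^ 2 \<le> y' 0 ^ 2 + (real d + 1/2) * y 0 ^ 2"
    unfolding y_def y'_def
    by (rule weber_energy_le_energy_at_zero)
      (auto intro!: derivative_eq_intros DERIV_hermite_fun DERIV_hermite_fun_deriv)
  have "(hermite_amplitude d)\<^sup>2 \<le> 3\<^sup>2"
    using hermite_amplitude_nonneg hermite_amplitude_le_three[OF assms(1)] by (intro power_mono)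
  then have "(real d + 1/2) * (hermite_amplitude d)\<^sup>2 \<le> (real d + 1/2) * 9"
    by (intro mult_left_mono) auto
  then have energy_at_zero: "y' 0 ^ 2 + (real d + 1/2) * y 0 ^ 2 \<le> 9 * real d + 9/2"
    using scaled_hermite_energy_at_zero[OF assms(1)] unfolding y_def y'_def by simp
  have "x\<^sup>2 \<le> real d"
    using power_mono[OF assms(2) abs_ge_zero, of 2] by simp
  then have "3 * real d / 4 * y x ^ 2 \<le> (real d + 1/2 - x\<^sup>2 / 4) * y x ^ 2"
    by (intro mult_right_mono) auto
  moreover have "real d \<ge> 1"
    using assms(1) by simp
  ultimately have "real d * (3/4 * y x ^ 2) \<le> real d * 14"
    using energy energy_at_zero zero_le_power2[of "y' x"] by linarith
  then have "y x ^ 2 \<le> 5\<^sup>2"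
    using assms(1) by simp
  then show ?thesis
    using abs_le_square_iff[of "y x" 5] unfolding y_def by simp
qed

definition hermite_rem_deriv :: "nat \<Rightarrow> real \<Rightarrow> real" where
  "hermite_rem_deriv d x = hermite_scale d * hermite_fun_deriv d x
    - sqrt (real d) * cos (hermite_phase d + sqrt (real d) * x)"

lemma DERIV_hermite_rem: "(hermite_rem d has_real_derivative hermite_rem_deriv d x) (at x)"
  unfolding hermite_rem_eq [abs_def] hermite_rem_deriv_def
  by (auto intro!: derivative_eq_intros DERIV_hermite_fun)

lemma DERIV_hermite_rem_deriv:
  "(hermite_rem_deriv d has_real_derivative
      - real d * hermite_rem d x + (x\<^sup>2 / 4 - 1/2) * (hermite_scale d * hermite_fun d x)) (at x)"
  unfolding hermite_rem_deriv_def [abs_def] hermite_rem_eq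
  by (auto intro!: derivative_eq_intros DERIV_hermite_fun_deriv simp: algebra_simps)

lemma hermite_rem_amplitude_at_zero:
  assumes "d \<ge> 1"
  shows "sqrt ((hermite_rem_deriv d 0)\<^sup>2 / real d + (hermite_rem d 0)\<^sup>2) = \<bar>hermite_amplitude d - 1\<bar>"
proof -
  define v where "v = hermite_amplitude d"
  define \<theta> where "\<theta> = hermite_phase d"
  have "hermite_rem d 0 = (v - 1) * sin \<theta>" "hermite_rem_deriv d 0 = sqrt (real d) * ((v - 1) * cos \<theta>)"
    using hermite_at_zero[OF assms] unfolding hermite_rem_eq hermite_rem_deriv_def v_def \<theta>_def
    by (simp_all add: algebra_simps)
  then have "(hermite_rem_deriv d 0)\<^sup>2 / real d + (hermite_rem d 0)\<^sup>2
      = (v - 1)\<^sup>2 * (cos \<theta>)\<^sup>2 + (v - 1)\<^sup>2 * (sin \<theta>)\<^sup>2"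
    using assms by (simp add: power_mult_distrib)
  also have "\<dots> = (v - 1)\<^sup>2"
    by (simp flip: distrib_left)
  finally show ?thesis
    unfolding v_def by simp
qed

lemma hermite_rem_amplitude_diff_le:
  assumes "d \<ge> 1" "a \<le> b" "\<bar>a\<bar> \<le> sqrt (real d)" "\<bar>b\<bar> \<le> sqrt (real d)"
  shows "\<bar>sqrt ((hermite_rem_deriv d b)\<^sup>2 / real d + (hermite_rem d b)\<^sup>2)
      - sqrt ((hermite_rem_deriv d a)\<^sup>2 / real d + (hermite_rem d a)\<^sup>2)\<bar>
    \<le> (5 * (b ^ 3 / 12 + b / 2) - 5 * (a ^ 3 / 12 + a / 2)) / sqrt (real d)"
proof (rule oscillator_amplitude_diff_le[where G' = "\<lambda>t. 5 * (t\<^sup>2 / 4 + 1/2)"])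
  fix t
  assume "a \<le> t" "t \<le> b"
  then have t: "\<bar>t\<bar> \<le> sqrt (real d)"
    using assms(3,4) by linarith
  show "(hermite_rem d has_real_derivative hermite_rem_deriv d t) (at t)"
    by (rule DERIV_hermite_rem)
  show "(hermite_rem_deriv d has_real_derivative
      - real d * hermite_rem d t + (t\<^sup>2 / 4 - 1/2) * (hermite_scale d * hermite_fun d t)) (at t)"
    by (rule DERIV_hermite_rem_deriv)
  show "((\<lambda>t. 5 * (t ^ 3 / 12 + t / 2)) has_real_derivative 5 * (t\<^sup>2 / 4 + 1/2)) (at t)"
    by (auto intro!: derivative_eq_intros simp: field_simps power2_eq_square)
  have "\<bar>t\<^sup>2 / 4 - 1/2\<bar> \<le> t\<^sup>2 / 4 + 1/2"
    using zero_le_power2[of t] by (simp add: abs_le_iff)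
  moreover have "\<bar>hermite_scale d * hermite_fun d t\<bar> \<le> 5"
    by (rule scaled_hermite_fun_bounded[OF assms(1) t])
  ultimately have "\<bar>t\<^sup>2 / 4 - 1/2\<bar> * \<bar>hermite_scale d * hermite_fun d t\<bar> \<le> (t\<^sup>2 / 4 + 1/2) * 5"
    by (intro mult_mono) auto
  then show "\<bar>(t\<^sup>2 / 4 - 1/2) * (hermite_scale d * hermite_fun d t)\<bar> \<le> 5 * (t\<^sup>2 / 4 + 1/2)"
    by (simp add: abs_mult mult.commute)
qed (use assms in auto)

lemma hermite_rem_bound:
  assumes "d \<ge> 1" "\<bar>x\<bar> \<le> sqrt (real d)"
  shows "\<bar>hermite_rem d x\<bar> \<le> 2 / real d + 5 * (\<bar>x\<bar> ^ 3 / 12 + \<bar>x\<bar> / 2) / sqrt (real d)"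
proof -
  define A where "A t = sqrt ((hermite_rem_deriv d t)\<^sup>2 / real d + (hermite_rem d t)\<^sup>2)" for t
  have "A x \<le> A 0 + 5 * (\<bar>x\<bar> ^ 3 / 12 + \<bar>x\<bar> / 2) / sqrt (real d)"
  proof (cases "x \<ge> 0")
    case True
    then show ?thesis
      using hermite_rem_amplitude_diff_le[OF assms(1) True _ assms(2)] unfolding A_def by simp
  next
    case False
    then have "\<bar>A 0 - A x\<bar> \<le> (0 - 5 * (x ^ 3 / 12 + x / 2)) / sqrt (real d)"
      using hermite_rem_amplitude_diff_le[of d x 0] assms unfolding A_def by simp
    moreover have "0 - 5 * (x ^ 3 / 12 + x / 2) = 5 * (\<bar>x\<bar> ^ 3 / 12 + \<bar>x\<bar> / 2)"
      using False by (simp add: power3_eq_cube)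
    ultimately show ?thesis by simp
  qed
  moreover have "\<bar>hermite_rem d x\<bar> \<le> A x"
    unfolding A_def using assms(1) by (simp add: real_le_rsqrt)
  moreover have "A 0 \<le> 2 / real d"
    using hermite_rem_amplitude_at_zero[OF assms(1)] hermite_amplitude_close_one[OF assms(1)]
    unfolding A_def by simp
  ultimately show ?thesis by simp
qed

theorem lemmaA6:
  shows "\<exists>C::real. \<forall>d::nat. \<forall>x::real. d \<ge> 1 \<longrightarrow> \<bar>x\<bar> \<le> sqrt (real d) \<longrightarrow>
    \<bar>hermite_rem d x\<bar> \<le> C * Max {\<bar>x\<bar> ^ 3 / sqrt (real d), \<bar>x\<bar> / sqrt (real d), x\<^sup>2 / real d, 1 / real d}"
proof (intro exI[of _ 5] allI impI)
  fix d :: nat and x :: real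
  assume d: "d \<ge> 1" and x: "\<bar>x\<bar> \<le> sqrt (real d)"
  define M where "M = Max {\<bar>x\<bar> ^ 3 / sqrt (real d), \<bar>x\<bar> / sqrt (real d), x\<^sup>2 / real d, 1 / real d}"
  have M: "\<bar>x\<bar> ^ 3 / sqrt (real d) \<le> M" "\<bar>x\<bar> / sqrt (real d) \<le> M" "1 / real d \<le> M"
    unfolding M_def by auto
  have "0 < 1 / real d"
    using d by simp
  have "5 * (\<bar>x\<bar> ^ 3 / 12 + \<bar>x\<bar> / 2) / sqrt (real d)
      = 5/12 * (\<bar>x\<bar> ^ 3 / sqrt (real d)) + 5/2 * (\<bar>x\<bar> / sqrt (real d))"
    using d by (simp add: field_simps)
  then have "\<bar>hermite_rem d x\<bar> \<le> 2 * (1 / real d) + 5/12 * (\<bar>x\<bar> ^ 3 / sqrt (real d)) + 5/2 * (\<bar>x\<bar> / sqrt (real d))"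
    using hermite_rem_bound[OF d x] by simp
  with M \<open>0 < 1 / real d\<close> show "\<bar>hermite_rem d x\<bar> \<le> 5 * M"
    by linarith
qed

end
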